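(* In the geometry $\Gamma_\mathbb{F}(\mathbb{A})$: (1) Two distinct lines $[x,u]$ and $[y,v]$ are coplanar (i.e. incident with a common plane) if and only if $(x|y)=(u|v)$; in that case the unique sharp $\mathbb{F}$-morphism $\phi:\mathbb{A}\to\mathbb{O}$ with $\phi(x)=u$ and $\phi(y)=v$ is the unique plane incident with both lines. (2) If two lines are incident with two distinct common points, then they are incident with exactly the same set of points.
   Context: $\mathbb{H}$ and $\mathbb{O}$ are the real quaternions and real octonions, with $\mathbb{C}\subset\mathbb{H}\subset\mathbb{O}$, norm $|\cdot|$, conjugation $x\mapsto\bar x$. Let $(\mathbb{F},\mathbb{A})$ be either $(\mathbb{R},\mathbb{H})$ or $(\mathbb{C},\mathbb{O})$. $\mathbb{A}$ and $\mathbb{O}$ are regarded as right $\mathbb{F}$-vector spaces via right multiplication by elements of $\mathbb{F}$. The real inner product is $(x|y)_\mathbb{R}=\mathrm{Re}(\bar x y)$; for $\mathbb{F}=\mathbb{R}$ put $(x|y)=(x|y)_\mathbb{R}$, and for $\mathbb{F}=\mathbb{C}$ let $(x|y)=(x|y)_\mathbb{C}$ be the $\mathbb{C}$-component of $\bar x y$ in the real-orthogonal decomposition $\mathbb{O}=\mathbb{C}\oplus\mathbb{C}^{\perp}$ (a Hermitian form with real part $(x|y)_\mathbb{R}$). Write $x\perp y$ if $(x|y)=0$. For $\mathbb{B}\in\{\mathbb{A},\mathbb{O}\}$, $\mathrm{Pu}_\mathbb{F}(\mathbb{B})$ is the real-orthogonal complement of $\mathbb{F}$ in $\mathbb{B}$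 (an $\mathbb{F}$-subspace; $\dim_\mathbb{F}\mathrm{Pu}_\mathbb{F}(\mathbb{A})=3$). A sharp $\mathbb{F}$-morphism $\mathbb{A}\to\mathbb{O}$ is an $\mathbb{F}$-linear multiplicative map preserving $(\cdot|\cdot)$. The geometry $\Gamma_\mathbb{F}(\mathbb{A})$ has: points the 1-dimensional $\mathbb{F}$-subspaces $[x]$ of $\mathrm{Pu}_\mathbb{F}(\mathbb{A})$; lines the sets $[x,u]=\{(xt,ut):t\in\mathbb{F}^*\}$ with $x\in\mathrm{Pu}_\mathbb{F}(\mathbb{A})$, $u\in\mathrm{Pu}_\mathbb{F}(\mathbb{O})$, $|x|=|u|\neq0$; planes the sharp $\mathbb{F}$-morphisms $\phi:\mathbb{A}\to\mathbb{O}$. Incidence: every point is incident with every plane; $[y]$ is incident with $[x,u]$ iff $(x|y)=0$; $[x,u]$ is incident with $\phi$ iff $\phi(x)=u$. It is a (flat) geometry of type $C_3$. *)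

theory Defs
  imports Complex_Main
begin

text \<open>Quaternions as pairs of complex numbers and octonions as pairs of quaternions,
  both via the Cayley-Dickson doubling (a,b)(c,d) = (ac - conj(d) b, d a + b conj(c)),
  conj(a,b) = (conj a, -b).\<close>

type_synonym quat = "complex \<times> complex"
type_synonym oct = "quat \<times> quat"

definition qadd :: "quat \<Rightarrow> quat \<Rightarrow> quat" where
  "qadd p q = (fst p + fst q, snd p + snd q)"
definition qneg :: "quat \<Rightarrow> quat" where
  "qneg p = (- fst p, - snd p)"
definition qmul :: "quat \<Rightarrow> quat \<Rightarrow> quat" where
  "qmul p q = (fst p * fst q - cnj (snd q) * snd p, snd q * fst p + snd p * cnj (fst q))"
definition qconj :: "quat \<Rightarrow> quat" where
  "qconj p = (cnj (fst p), - snd p)"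
definition qzero :: quat where "qzero = (0, 0)"

definition oadd :: "oct \<Rightarrow> oct \<Rightarrow> oct" where
  "oadd p q = (qadd (fst p) (fst q), qadd (snd p) (snd q))"
definition omul :: "oct \<Rightarrow> oct \<Rightarrow> oct" where
  "omul p q = (qadd (qmul (fst p) (fst q)) (qneg (qmul (qconj (snd q)) (snd p))),
               qadd (qmul (snd q) (fst p)) (qmul (snd p) (qconj (fst q))))"
definition oconj :: "oct \<Rightarrow> oct" where
  "oconj p = (qconj (fst p), qneg (snd p))"
definition ozero :: oct where "ozero = (qzero, qzero)"

definition oRe :: "oct \<Rightarrow> real" where
  "oRe p = Re (fst (fst p))"
definition onorm :: "oct \<Rightarrow> real" where
  "onorm p = sqrt (oRe (omul (oconj p) p))"

definition remb :: "real \<Rightarrow> oct" where "remb r = ((complex_of_real r, 0), qzero)"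
definition cemb :: "complex \<Rightarrow> oct" where "cemb z = ((z, 0), qzero)"
definition hemb :: "quat \<Rightarrow> oct" where "hemb q = (q, qzero)"

text \<open>The two cases (F,A) = (R,H) and (C,O).\<close>
datatype pair_case = RH | CO

definition Fset :: "pair_case \<Rightarrow> oct set" where
  "Fset c = (case c of RH \<Rightarrow> range remb | CO \<Rightarrow> range cemb)"
definition Aset :: "pair_case \<Rightarrow> oct set" where
  "Aset c = (case c of RH \<Rightarrow> range hemb | CO \<Rightarrow> UNIV)"

text \<open>(x|y): for F = R the real part of conj(x) y; for F = C the C-component of conj(x) y
  in O = C + C^perp.  Values are regarded as elements of F inside O.\<close>
definition herm :: "pair_case \<Rightarrow> oct \<Rightarrow> oct \<Rightarrow> oct" where
  "herm c x y = (case c of RH \<Rightarrow> remb (oRe (omul (oconj x) y))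
                          | CO \<Rightarrow> cemb (fst (fst (omul (oconj x) y))))"

definition Pu :: "pair_case \<Rightarrow> oct set \<Rightarrow> oct set" where
  "Pu c B = {x \<in> B. \<forall>t \<in> Fset c. oRe (omul (oconj x) t) = 0}"

text \<open>Sharp F-morphisms A -> O (only the values on A are relevant).\<close>
definition sharp :: "pair_case \<Rightarrow> (oct \<Rightarrow> oct) \<Rightarrow> bool" where
  "sharp c \<phi> \<longleftrightarrow>
     (\<forall>x \<in> Aset c. \<forall>y \<in> Aset c. \<phi> (oadd x y) = oadd (\<phi> x) (\<phi> y)) \<and>
     (\<forall>x \<in> Aset c. \<forall>t \<in> Fset c. \<phi> (omul x t) = omul (\<phi> x) t) \<and>
     (\<forall>x \<in> Aset c. \<forall>y \<in> Aset c. \<phi> (omul x y) = omul (\<phi> x) (\<phi> y)) \<and>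
     (\<forall>x \<in> Aset c. \<forall>y \<in> Aset c. herm c (\<phi> x) (\<phi> y) = herm c x y)"

definition point_set :: "pair_case \<Rightarrow> oct \<Rightarrow> oct set" where
  "point_set c x = {omul x t | t. t \<in> Fset c}"
definition line_set :: "pair_case \<Rightarrow> oct \<Rightarrow> oct \<Rightarrow> (oct \<times> oct) set" where
  "line_set c x u = {(omul x t, omul u t) | t. t \<in> Fset c \<and> t \<noteq> ozero}"

definition line_params :: "pair_case \<Rightarrow> oct \<Rightarrow> oct \<Rightarrow> bool" where
  "line_params c x u \<longleftrightarrow> x \<in> Pu c (Aset c) \<and> u \<in> Pu c UNIV \<and> onorm x = onorm u \<and> onorm x \<noteq> 0"

definition is_point :: "pair_case \<Rightarrow> oct set \<Rightarrow> bool" where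
  "is_point c P \<longleftrightarrow> (\<exists>x. x \<in> Pu c (Aset c) \<and> x \<noteq> ozero \<and> P = point_set c x)"
definition is_line :: "pair_case \<Rightarrow> (oct \<times> oct) set \<Rightarrow> bool" where
  "is_line c L \<longleftrightarrow> (\<exists>x u. line_params c x u \<and> L = line_set c x u)"

definition inc_point_line :: "pair_case \<Rightarrow> oct set \<Rightarrow> (oct \<times> oct) set \<Rightarrow> bool" where
  "inc_point_line c P L \<longleftrightarrow> (\<exists>x u y. line_params c x u \<and> L = line_set c x u \<and>
      y \<in> Pu c (Aset c) \<and> y \<noteq> ozero \<and> P = point_set c y \<and> herm c x y = ozero)"
definition inc_line_plane :: "pair_case \<Rightarrow> (oct \<times> oct) set \<Rightarrow> (oct \<Rightarrow> oct) \<Rightarrow> bool" where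
  "inc_line_plane c L \<phi> \<longleftrightarrow> (\<exists>x u. line_params c x u \<and> L = line_set c x u \<and> \<phi> x = u)"

end

theory Submission
  imports Defs "HOL-Analysis.Analysis"
begin

text \<open>
  Orthonormal elements a, b of Pu_F(A) generate, together with 1 and ab, an F-basis of A that
  multiplies like the standard basis of H; over C the scalars pass through the pure basis
  elements only up to conjugation, which is harmless.  Given lines [x,u] and [y,v] with
  (x|y) = (u|v), Gram-Schmidt turns x, y and u, v into two such frames with the same
  coordinates, and the F-linear map matching the two bases is multiplicative and isometric;
  any sharp morphism sending x to u and y to v matches the bases, hence agrees with it.
  For the points: the pure elements orthogonal to two independent pure p, q are the
  F-multiples of the product of the frame built from p and q, so two lines through two
  common points have proportional first coordinates and hence the same points.
\<close>

lemma orthonormal_list_perp_zero: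
  fixes L :: "'a::euclidean_space list" and w :: 'a
  assumes len: "length L = DIM('a)"
    and on: "\<And>i j. i < length L \<Longrightarrow> j < length L \<Longrightarrow> inner (L!i) (L!j) = (if i = j then 1 else 0)"
    and ow: "\<And>i. i < length L \<Longrightarrow> inner (L!i) w = 0"
  shows "w = 0"
proof -
  have dL: "distinct L"
  proof (subst distinct_conv_nth, intro allI impI)
    fix i j assume "i < length L" "j < length L" "i \<noteq> j"
    then show "L!i \<noteq> L!j" using on[of i j] on[of i i] by auto
  qed
  let ?B = "set L"
  have po: "pairwise orthogonal ?B"
    unfolding pairwise_def orthogonal_def by (metis dL distinct_Ex1 on)
  have "0 \<notin> ?B"
    by (metis in_set_conv_nth inner_zero_left on zero_neq_one)
  then have ind: "independent ?B" by (rule pairwise_orthogonal_independent[OF po])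
  have "dim (UNIV::'a set) \<le> card ?B" using dL len by (simp add: distinct_card)
  then have "w \<in> span ?B" using card_ge_dim_independent[OF subset_UNIV ind] by auto
  moreover have "\<And>y. y \<in> ?B \<Longrightarrow> orthogonal w y"
    by (metis in_set_conv_nth inner_commute ow orthogonal_def)
  ultimately have "orthogonal w w" by (rule orthogonal_to_span)
  then show ?thesis by (simp add: orthogonal_self)
qed

section \<open>Octonions in coordinates\<close>

text \<open>
  The octonion ((a,b),(c,d)) has C-component a = fst (fst x); it is real-orthogonal to R
  iff cnj a = - a, and to C iff a = 0.
\<close>

lemma oct_cases: obtains a b c d where "(x::oct) = ((a,b),(c,d))" by (metis prod.exhaust)

lemma omul_coords: "omul ((a,b),(c,d)) ((a',b'),(c',d')) =
  ((a*a' - cnj b'*b - cnj c'*c - cnj d*d', b'*a + b*cnj a' - d*cnj c' + d'*cnj c),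
   (c'*a - cnj b*d' + c*cnj a' + cnj b'*d, b*c' + d'*cnj a - b'*c + d*a'))"
  by (simp add: omul_def qmul_def qadd_def qneg_def qconj_def algebra_simps)

lemma oconj_coords: "oconj ((a,b),(c,d)) = ((cnj a, -b),(-c,-d))"
  by (simp add: oconj_def qconj_def qneg_def)

lemma oadd_eq_plus: "oadd x y = x + y" by (simp add: oadd_def qadd_def prod_eq_iff)

lemma ozero_eq_zero: "ozero = 0" by (simp add: ozero_def qzero_def zero_prod_def)

lemma cemb_coords: "cemb t = ((t,0),(0,0))" by (simp add: cemb_def qzero_def)

lemma remb_eq_cemb: "remb r = cemb (complex_of_real r)" by (simp add: remb_def cemb_def)

lemma hemb_coords: "hemb q = (q,(0,0))" by (simp add: hemb_def qzero_def)

lemma cemb_eq_iff: "cemb s = cemb t \<longleftrightarrow> s = t" by (simp add: cemb_coords)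

lemma cemb_0: "cemb 0 = 0" by (simp add: cemb_coords zero_prod_def)

lemma cemb_eq_0_iff: "cemb s = 0 \<longleftrightarrow> s = 0" by (simp add: cemb_coords zero_prod_def)

lemma cemb_neg[simp]: "cemb (-t) = - cemb t" by (simp add: cemb_coords)

lemma omul_cemb_cemb: "omul (cemb s) (cemb t) = cemb (s*t)" by (simp add: cemb_coords omul_coords)

lemma fst_fst_cemb[simp]: "fst (fst (cemb t)) = t" by (simp add: cemb_coords)

lemma omul_add_left: "omul (x + y) z = omul x z + omul y z"
  by (rule oct_cases[of x]; rule oct_cases[of y]; rule oct_cases[of z]; simp add: omul_coords
    algebra_simps)

lemma omul_add_right: "omul z (x + y) = omul z x + omul z y"
  by (rule oct_cases[of x]; rule oct_cases[of y]; rule oct_cases[of z]; simp add: omul_coords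
    algebra_simps)

lemma omul_neg_left: "omul (-x) y = - omul x y"
  by (rule oct_cases[of x]; rule oct_cases[of y]; hypsubst_thin; simp add: omul_coords
    algebra_simps)

lemma omul_neg_right: "omul x (-y) = - omul x y"
  by (rule oct_cases[of x]; rule oct_cases[of y]; hypsubst_thin; simp add: omul_coords
    algebra_simps)

declare omul_neg_left[simp] omul_neg_right[simp]

lemma omul_alt_left: "omul x (omul x y) = omul (omul x x) y"
  by (rule oct_cases[of x]; rule oct_cases[of y]; hypsubst_thin; simp add: omul_coords; intro conjI;
    algebra)

lemma omul_alt_right: "omul (omul y x) x = omul y (omul x x)"
  by (rule oct_cases[of x]; rule oct_cases[of y]; hypsubst_thin; simp add: omul_coords; intro conjI;
    algebra)

definition smul :: "oct \<Rightarrow> complex \<Rightarrow> oct" where "smul x t = omul x (cemb t)"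

lemma smul_coords: "smul ((a,b),(c,d)) t = ((a*t, b*cnj t),(c*cnj t, d*t))"
  by (simp add: smul_def cemb_coords omul_coords)

lemma smul_add_left: "smul (x+y) t = smul x t + smul y t"
  by (rule oct_cases[of x]; rule oct_cases[of y]; hypsubst_thin; simp add: smul_coords
    algebra_simps)

lemma smul_add_right: "smul x (s+t) = smul x s + smul x t"
  by (rule oct_cases[of x]; hypsubst_thin; simp add: smul_coords algebra_simps)

lemma smul_assoc: "smul (smul x s) t = smul x (s*t)"
  by (rule oct_cases[of x]; hypsubst_thin; simp add: smul_coords algebra_simps)

lemma smul_one[simp]: "smul x 1 = x"
  by (rule oct_cases[of x]; hypsubst_thin; simp add: smul_coords)

lemma smul_zero_right[simp]: "smul x 0 = 0"
  by (rule oct_cases[of x]; hypsubst_thin; simp add: smul_coords zero_prod_def)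

lemma smul_zero_left[simp]: "smul 0 t = 0"
  by (simp add: smul_coords zero_prod_def)

lemma smul_minus_one: "smul x (-1) = - x"
  by (rule oct_cases[of x]; hypsubst_thin; simp add: smul_coords)

lemma smul_cemb: "smul (cemb s) t = cemb (s*t)"
  by (simp add: smul_coords cemb_coords)

lemma smul_cancel: "smul z t = smul w t \<Longrightarrow> t \<noteq> 0 \<Longrightarrow> z = w"
proof -
  assume a: "smul z t = smul w t" "t \<noteq> 0"
  then have "smul (smul z t) (inverse t) = smul (smul w t) (inverse t)" by simp
  then show ?thesis using a(2) by (simp add: smul_assoc)
qed

lemma omul_one_left[simp]: "omul (cemb 1) x = x"
  by (rule oct_cases[of x]; hypsubst_thin; simp add: omul_coords cemb_coords)

lemma omul_one_right[simp]: "omul x (cemb 1) = x"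
  by (rule oct_cases[of x]; hypsubst_thin; simp add: omul_coords cemb_coords)

lemma cemb_neg_omul: "omul (cemb (-1)) y = - y" by simp

lemma omul_cemb_eq_smul: "omul x (cemb t) = smul x t" by (simp add: smul_def)

lemma omul_smul_real_left:
  "omul (smul g (complex_of_real r)) h = smul (omul g h) (complex_of_real r)"
  by (rule oct_cases[of g]; rule oct_cases[of h]; hypsubst_thin; simp add: omul_coords smul_coords;
    intro conjI; algebra)

lemma omul_smul_real_right:
  "omul g (smul h (complex_of_real r)) = smul (omul g h) (complex_of_real r)"
  by (rule oct_cases[of g]; rule oct_cases[of h]; hypsubst_thin; simp add: omul_coords smul_coords;
    intro conjI; algebra)

lemma fst_fst_smul: "fst (fst (smul x t)) = fst (fst x) * t"
  by (rule oct_cases[of x]; hypsubst_thin; simp add: smul_coords)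

lemma collapse_zero_C_component: "fst (fst w) = 0 \<Longrightarrow> ((0, snd (fst w)), snd w) = w"
  by (metis prod.collapse)

lemma cemb_omul_imag: "fst (fst g) = 0 \<Longrightarrow> omul (cemb \<alpha>) g = smul g (cnj \<alpha>)"
  by (rule oct_cases[of g]; hypsubst_thin; simp add: omul_coords smul_coords cemb_coords)

lemma omul_smul_imag: "fst (fst g) = 0 \<Longrightarrow> fst (fst h) = 0 \<Longrightarrow>
   omul (smul g \<alpha>) (smul h \<beta>) = smul (cemb (fst (fst (omul g h)))) (cnj \<alpha> * \<beta>)
     + smul ((0, snd (fst (omul g h))), snd (omul g h)) (cnj \<alpha> * cnj \<beta>)"
  by (rule oct_cases[of g]; rule oct_cases[of h]; hypsubst_thin; simp add: omul_coords smul_coords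
    cemb_coords; simp add: algebra_simps)

definition cinner :: "oct \<Rightarrow> oct \<Rightarrow> complex" where "cinner x y = fst (fst (omul (oconj x) y))"

lemma cinner_coords:
  "cinner ((a,b),(c,d)) ((a',b'),(c',d')) = cnj a * a' + cnj b' * b + cnj c' * c + cnj d * d'"
  by (simp add: cinner_def omul_coords oconj_coords algebra_simps)

lemma cinner_add_left: "cinner (x+y) z = cinner x z + cinner y z"
  by (rule oct_cases[of x]; rule oct_cases[of y]; rule oct_cases[of z]; hypsubst_thin; simp add:
    cinner_coords algebra_simps)

lemma cinner_add_right: "cinner z (x+y) = cinner z x + cinner z y"
  by (rule oct_cases[of x]; rule oct_cases[of y]; rule oct_cases[of z]; hypsubst_thin; simp add:
    cinner_coords algebra_simps)

lemma cinner_smul_right: "cinner x (smul y t) = cinner x y * t"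
  by (rule oct_cases[of x]; rule oct_cases[of y]; hypsubst_thin; simp add: cinner_coords smul_coords
    algebra_simps)

lemma cinner_smul_left: "cinner (smul x t) y = cnj t * cinner x y"
  by (rule oct_cases[of x]; rule oct_cases[of y]; hypsubst_thin; simp add: cinner_coords smul_coords
    algebra_simps)

lemma cinner_sym: "cinner y x = cnj (cinner x y)"
  by (rule oct_cases[of x]; rule oct_cases[of y]; hypsubst_thin; simp add: cinner_coords
    algebra_simps)

lemma Re_cinner: "Re (cinner x y) = inner x y"
  by (rule oct_cases[of x]; rule oct_cases[of y]; hypsubst_thin; simp add: cinner_coords
    inner_complex_def algebra_simps)

lemma cinner_self_real: "cinner x x = complex_of_real (inner x x)"
  by (rule oct_cases[of x]; hypsubst_thin; simp add: cinner_coords inner_complex_def complex_eq_iff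
    algebra_simps)

lemma cinner_one_left: "cinner (cemb 1) z = fst (fst z)"
  by (rule oct_cases[of z]; hypsubst_thin; simp add: cinner_coords cemb_coords)

lemma cinner_cemb_right: "cinner x (cemb s) = cnj (fst (fst x)) * s"
  by (rule oct_cases[of x]; hypsubst_thin; simp add: cinner_coords cemb_coords)

lemma cinner_zero_right[simp]: "cinner x 0 = 0"
  by (rule oct_cases[of x]; hypsubst_thin; simp add: cinner_coords zero_prod_def)

lemma cinner_omul_self: "cinner (omul x y) (omul x y) = cinner x x * cinner y y"
  by (rule oct_cases[of x]; rule oct_cases[of y]; hypsubst_thin; simp add: omul_coords
    cinner_coords; algebra)

lemma oconj_mul_self: "omul (oconj x) x = cemb (cinner x x)"
  by (rule oct_cases[of x]; simp add: omul_coords oconj_coords cinner_coords cemb_coords; intro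
    conjI; algebra)

lemma oconj_imag: "cnj (fst (fst x)) = - fst (fst x) \<Longrightarrow> oconj x = smul x (-1)"
  by (rule oct_cases[of x]; hypsubst_thin; simp add: oconj_coords smul_coords)

lemma omul_self_imag: "cnj (fst (fst x)) = - fst (fst x) \<Longrightarrow> omul x x = cemb (- cinner x x)"
proof -
  assume r: "cnj (fst (fst x)) = - fst (fst x)"
  have "omul (smul x (complex_of_real (-1))) x = cemb (cinner x x)"
    using oconj_mul_self[of x] oconj_imag[OF r] by simp
  then have "smul (omul x x) (-1) = cemb (cinner x x)"
    by (simp add: omul_smul_real_left[of x "-1", simplified])
  then have "smul (smul (omul x x) (-1)) (-1) = smul (cemb (cinner x x)) (-1)" by simp
  then show ?thesis by (simp add: smul_assoc smul_cemb)
qed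

lemma omul_anticomm_imag: "cnj (fst (fst x)) = - fst (fst x) \<Longrightarrow> cnj (fst (fst y)) = - fst (fst y) \<Longrightarrow>
   omul x y + omul y x = cemb (-(cinner x y + cinner y x))"
  by (rule oct_cases[of x]; rule oct_cases[of y]; hypsubst_thin; simp add: omul_coords cinner_coords
    cemb_coords; intro conjI; algebra)

lemma cinner_imag_left: "cnj (fst (fst x)) = - fst (fst x) \<Longrightarrow> cinner x y = - fst (fst (omul x y))"
  by (rule oct_cases[of x]; rule oct_cases[of y]; hypsubst_thin; simp add: omul_coords
    cinner_coords; algebra)

lemma onorm_eq_norm: "Defs.onorm x = norm x"
  unfolding Defs.onorm_def oRe_def norm_eq_sqrt_inner by (metis cinner_def Re_cinner)

lemma oRe_oconj_mul: "oRe (omul (oconj x) y) = Re (cinner x y)"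
  by (simp add: oRe_def cinner_def)

section \<open>The scalars F and the form (x|y)\<close>

text \<open>
  Both cases are handled at once by reading F as the subset scal c of C, acting through
  cemb, and (x|y) as the complex number form c x y.
\<close>

definition scal :: "pair_case \<Rightarrow> complex set" where
  "scal c = (case c of RH \<Rightarrow> range complex_of_real | CO \<Rightarrow> UNIV)"

definition form :: "pair_case \<Rightarrow> oct \<Rightarrow> oct \<Rightarrow> complex" where
  "form c x y = (case c of RH \<Rightarrow> complex_of_real (Re (cinner x y)) | CO \<Rightarrow> cinner x y)"

definition pure :: "pair_case \<Rightarrow> oct \<Rightarrow> bool" where
  "pure c x \<longleftrightarrow> form c (cemb 1) x = 0"

lemma herm_eq_cemb_form: "herm c x y = cemb (form c x y)"
  by (cases c) (simp_all add: herm_def form_def remb_eq_cemb cinner_def oRe_def)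

lemma herm_eq_iff_form_eq: "herm c x y = herm c u v \<longleftrightarrow> form c x y = form c u v"
  by (simp add: herm_eq_cemb_form cemb_eq_iff)

lemma herm_eq_ozero_iff: "herm c x y = ozero \<longleftrightarrow> form c x y = 0"
  by (simp add: herm_eq_cemb_form ozero_eq_zero cemb_eq_0_iff)

lemma remb_eq_comp: "remb = cemb \<circ> complex_of_real" by (rule ext) (simp add: remb_eq_cemb)

lemma Fset_scal: "Fset c = cemb ` scal c"
  by (cases c) (simp_all add: Fset_def scal_def remb_eq_comp image_comp)

lemma scal_cnj: "t \<in> scal c \<Longrightarrow> cnj t \<in> scal c" by (cases c) (auto simp: scal_def)

lemma scal_mult: "s \<in> scal c \<Longrightarrow> t \<in> scal c \<Longrightarrow> s * t \<in> scal c"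
  by (cases c) (auto simp: scal_def simp flip: of_real_mult)

lemma scal_of_real[simp]: "complex_of_real r \<in> scal c" by (cases c) (auto simp: scal_def)

lemma scal_one[simp]: "1 \<in> scal c" by (cases c) (auto simp: scal_def)

lemma scal_zero[simp]: "0 \<in> scal c" by (cases c) (auto simp: scal_def)

lemma scal_minus: "s \<in> scal c \<Longrightarrow> - s \<in> scal c"
proof -
  assume "s \<in> scal c"
  moreover have "- s = s * complex_of_real (-1)" by simp
  ultimately show ?thesis by (metis scal_mult scal_of_real)
qed

lemma scal_inverse: "s \<in> scal c \<Longrightarrow> inverse s \<in> scal c"
  by (cases c) (auto simp: scal_def simp flip: of_real_inverse)

lemma scal_RH: "t \<in> scal RH \<Longrightarrow> \<exists>r. t = complex_of_real r" by (auto simp: scal_def)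

lemma form_add_right: "form c z (x+y) = form c z x + form c z y"
  by (cases c) (simp_all add: form_def cinner_add_right)

lemma form_add_left: "form c (x+y) z = form c x z + form c y z"
  by (cases c) (simp_all add: form_def cinner_add_left)

lemma form_smul_right: "t \<in> scal c \<Longrightarrow> form c x (smul y t) = form c x y * t"
  by (cases c) (auto simp: form_def cinner_smul_right scal_def)

lemma form_smul_left: "t \<in> scal c \<Longrightarrow> form c (smul x t) y = cnj t * form c x y"
  by (cases c) (auto simp: form_def cinner_smul_left scal_def)

lemma form_sym: "form c y x = cnj (form c x y)"
  by (cases c) (simp_all add: form_def cinner_sym[of y x])

lemma form_neg_right: "form c x (-y) = - form c x y"
  using form_smul_right[of "-1" c x y] by (simp add: scal_minus smul_minus_one)

lemma form_diff_right: "form c x (y - z) = form c x y - form c x z"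
proof -
  have "form c x (y + - z) = form c x y + form c x (- z)" by (rule form_add_right)
  then show ?thesis by (simp add: form_neg_right)
qed

lemma form_diff_left: "form c (y - z) x = form c y x - form c z x"
proof -
  have "form c (y - z) x = cnj (form c x (y - z))" by (rule form_sym)
  also have "\<dots> = cnj (form c x y) - cnj (form c x z)" by (simp add: form_diff_right)
  also have "\<dots> = form c y x - form c z x" by (simp add: form_sym[of c x])
  finally show ?thesis .
qed

lemma form_self: "form c x x = complex_of_real (inner x x)"
  by (cases c) (auto simp: form_def cinner_self_real)

lemma cinner_form_self: "cinner x x = form c x x" by (simp add: cinner_self_real form_self)

lemma form_self_norm: "form c x x = complex_of_real (norm x ^ 2)"
  by (simp add: form_self power2_norm_eq_inner)

lemma form_self_zero: "form c x x = 0 \<longleftrightarrow> x = 0"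
  by (simp add: form_self)

lemma form_Re: "Re (form c x y) = inner x y"
  by (cases c) (auto simp: form_def Re_cinner)

lemma form_scal: "form c x y \<in> scal c"
  by (cases c) (auto simp: form_def scal_def)

lemma form_zero_right[simp]: "form c x 0 = 0" by (cases c) (auto simp: form_def)

lemma form_one_left:
  "form c (cemb 1) z = (case c of RH \<Rightarrow> complex_of_real (Re (fst (fst z))) | CO \<Rightarrow> fst (fst z))"
  by (cases c) (auto simp: form_def cinner_one_left)

lemma form_one_one: "form c (cemb 1) (cemb 1) = 1" by (cases c) (simp_all add: form_one_left)

lemma form_pure_left:
  "cnj (fst (fst x)) = - fst (fst x) \<Longrightarrow> form c x y = - form c (cemb 1) (omul x y)"
  by (cases c) (auto simp: form_def cinner_one_left cinner_imag_left)

lemma form_normalize: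
  assumes "x \<noteq> 0"
  shows "form c (smul x (complex_of_real (1 / norm x))) (smul x (complex_of_real (1 / norm x))) = 1"
proof -
  have "form c (smul x (complex_of_real (1 / norm x))) (smul x (complex_of_real (1 / norm x)))
      = cnj (complex_of_real (1 / norm x)) * (form c x x * complex_of_real (1 / norm x))"
    by (simp only: form_smul_left[OF scal_of_real] form_smul_right[OF scal_of_real] mult.assoc)
  also have "\<dots> = complex_of_real ((1 / norm x) * (norm x ^ 2 * (1 / norm x)))"
    by (simp only: form_self_norm complex_cnj_complex_of_real of_real_mult)
  also have "(1 / norm x) * (norm x ^ 2 * (1 / norm x)) = 1" using assms
    by (simp add: power2_eq_square)
  finally show ?thesis by simp
qed

lemma smul_normalize_back:
  assumes "x \<noteq> 0"
  shows "smul (smul x (complex_of_real (1 / norm x))) (complex_of_real (norm x)) = x"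
  using assms by (simp add: smul_assoc flip: of_real_mult)

lemma Pu_iff_pure: "x \<in> Pu c B \<longleftrightarrow> x \<in> B \<and> pure c x"
proof -
  have e: "oRe (omul (oconj x) (cemb s)) = Re (cnj (fst (fst x)) * s)" for s
    by (simp add: oRe_oconj_mul cinner_cemb_right)
  have key: "(\<forall>t\<in>Fset c. oRe (omul (oconj x) t) = 0) \<longleftrightarrow> pure c x"
  proof (cases c)
    case RH
    have "(\<forall>t\<in>Fset c. oRe (omul (oconj x) t) = 0) \<longleftrightarrow> (\<forall>r. Re (cnj (fst (fst x)) * complex_of_real r)
        = 0)"
      by (simp add: RH Fset_scal scal_def e)
    also have "\<dots> \<longleftrightarrow> Re (fst (fst x)) = 0" proof -
      have "Re (cnj (fst (fst x)) * complex_of_real r) = Re (fst (fst x)) * r" for r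
        by (cases "fst (fst x)") simp
      then show ?thesis by (metis mult_1_right mult_zero_left)
    qed
    finally show ?thesis by (simp add: pure_def form_one_left RH)
  next
    case CO
    have "(\<forall>t\<in>Fset c. oRe (omul (oconj x) t) = 0) \<longleftrightarrow> (\<forall>t. Re (cnj (fst (fst x)) * t) = 0)"
      by (simp add: CO Fset_scal scal_def e)
    also have "\<dots> \<longleftrightarrow> fst (fst x) = 0"
    proof
      assume h: "\<forall>t. Re (cnj (fst (fst x)) * t) = 0"
      from h[rule_format, of 1] h[rule_format, of \<i>] show "fst (fst x) = 0"
        by (simp add: complex_eq_iff)
    qed simp
    finally show ?thesis by (simp add: pure_def form_one_left CO)
  qed
  show ?thesis by (simp add: Pu_def key)
qed

lemma pure_imag: "pure c x \<Longrightarrow> cnj (fst (fst x)) = - fst (fst x)"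
  by (cases c; simp add: pure_def form_one_left; simp add: complex_eq_iff)

lemma pure_CO_fst: "pure CO x \<Longrightarrow> fst (fst x) = 0"
  by (auto simp: pure_def form_one_left)

lemma pure_smul: "pure c x \<Longrightarrow> t \<in> scal c \<Longrightarrow> pure c (smul x t)"
  by (simp add: pure_def form_smul_right)

lemma pure_diff: "pure c x \<Longrightarrow> pure c y \<Longrightarrow> pure c (x - y)"
  by (simp add: pure_def form_diff_right)

lemma Aset_RH: "x \<in> Aset RH \<longleftrightarrow> snd x = (0,0)"
  unfolding Aset_def by (auto simp: hemb_coords image_iff) (metis prod.collapse)

lemma Aset_CO[simp]: "Aset CO = UNIV" by (simp add: Aset_def)

lemma Aset_add: "x \<in> Aset c \<Longrightarrow> y \<in> Aset c \<Longrightarrow> x + y \<in> Aset c"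
  by (cases c; simp only: Aset_RH Aset_CO; simp)

lemma Aset_smul: "x \<in> Aset c \<Longrightarrow> smul x t \<in> Aset c"
  by (cases c; rule oct_cases[of x]; hypsubst_thin; simp only: Aset_RH Aset_CO; simp add:
    smul_coords)

lemma Aset_diff: "x \<in> Aset c \<Longrightarrow> y \<in> Aset c \<Longrightarrow> x - y \<in> Aset c"
proof -
  assume a: "x \<in> Aset c" "y \<in> Aset c"
  have "- y \<in> Aset c" using Aset_smul[OF a(2), where t="-1"] by (simp add: smul_minus_one)
  from Aset_add[OF a(1) this] show ?thesis by simp
qed

lemma Aset_mul: "x \<in> Aset c \<Longrightarrow> y \<in> Aset c \<Longrightarrow> omul x y \<in> Aset c"
  by (cases c; rule oct_cases[of x]; rule oct_cases[of y]; hypsubst_thin; simp only: Aset_RH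
    Aset_CO; simp add: omul_coords)

lemma Aset_cemb[simp]: "cemb t \<in> Aset c"
  by (cases c; simp only: Aset_RH Aset_CO; simp add: cemb_coords)

section \<open>Orthonormal pure pairs and their quaternion basis\<close>

definition frame :: "pair_case \<Rightarrow> oct \<Rightarrow> oct \<Rightarrow> bool" where
  "frame c a b \<longleftrightarrow> pure c a \<and> pure c b \<and> form c a a = 1 \<and> form c b b = 1 \<and> form c a b = 0"

context
  fixes c a b assumes ab: "frame c a b"
begin

lemma frame_pure1: "pure c a" and frame_pure2: "pure c b"
  and frame_norm1: "form c a a = 1" and frame_norm2: "form c b b = 1" and frame_orth: "form c a b = 0"
  using ab by (auto simp: frame_def)

lemma frame_imag1: "cnj (fst (fst a)) = - fst (fst a)"
  using pure_imag[OF frame_pure1] .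

lemma frame_imag2: "cnj (fst (fst b)) = - fst (fst b)"
  using pure_imag[OF frame_pure2] .

lemma frame_orth_sym: "form c b a = 0"
  using frame_orth form_sym[of c a b] by simp

lemma frame_sq1: "omul a a = cemb (-1)"
  using omul_self_imag[OF frame_imag1] frame_norm1 by (simp add: cinner_form_self[of a c])

lemma frame_sq2: "omul b b = cemb (-1)"
  using omul_self_imag[OF frame_imag2] frame_norm2 by (simp add: cinner_form_self[of b c])

lemma frame_anticomm: "omul b a = - omul a b"
proof -
  have "Re (cinner a b) = 0" using frame_orth form_Re[of c a b] Re_cinner[of a b] by simp
  then have "cinner a b + cinner b a = 0" by (simp add: cinner_sym[of b a] complex_eq_iff)
  then have "omul a b + omul b a = 0"
    using omul_anticomm_imag[OF frame_imag1 frame_imag2] by (simp add: cemb_0)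
  then show ?thesis by (simp add: add_eq_0_iff)
qed

lemma frame_1_12: "omul a (omul a b) = - b"
  by (simp add: omul_alt_left frame_sq1 cemb_neg_omul)

lemma frame_12_2: "omul (omul a b) b = - a"
  by (simp add: omul_alt_right frame_sq2 smul_minus_one)

lemma frame_12_1: "omul (omul a b) a = b"
proof -
  have "omul (omul a b) a = - omul (omul b a) a" by (simp add: frame_anticomm omul_neg_left)
  also have "\<dots> = b" by (simp add: omul_alt_right frame_sq1 smul_minus_one)
  finally show ?thesis .
qed

lemma frame_2_12: "omul b (omul a b) = a"
proof -
  have "omul b (omul a b) = - omul b (omul b a)" by (simp add: frame_anticomm omul_neg_right)
  also have "\<dots> = a" by (simp add: omul_alt_left frame_sq2 cemb_neg_omul)
  finally show ?thesis .
qed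

lemma frame_pure12: "pure c (omul a b)"
  using form_pure_left[OF frame_imag1, of c b] frame_orth by (simp add: pure_def)

lemma frame_imag12: "cnj (fst (fst (omul a b))) = - fst (fst (omul a b))"
  using pure_imag[OF frame_pure12] .

lemma frame_orth_1_12: "form c a (omul a b) = 0"
  using form_pure_left[OF frame_imag1, of c "omul a b"] frame_pure2
  by (simp add: frame_1_12 form_neg_right pure_def)

lemma frame_orth_2_12: "form c b (omul a b) = 0"
  using form_pure_left[OF frame_imag2, of c "omul a b"] frame_pure1
  by (simp add: frame_2_12 pure_def)

lemma frame_norm12: "form c (omul a b) (omul a b) = 1"
  using cinner_omul_self[of a b] frame_norm1 frame_norm2 by (simp add: cinner_form_self[of _ c])

lemma frame_sq12: "omul (omul a b) (omul a b) = cemb (-1)"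
  using omul_self_imag[OF frame_imag12] frame_norm12 by (simp add: cinner_form_self[of _ c])

end

lemma gram_schmidt_step:
  assumes u1: "form c x1 x1 = 1" and h: "h = form c x1 y"
  shows "form c (y - smul x1 h) (y - smul x1 h) = form c y y - cnj h * h"
    and "form c x1 (y - smul x1 h) = 0"
proof -
  have hs: "h \<in> scal c" unfolding h by (rule form_scal)
  have hy: "form c y x1 = cnj h" unfolding h by (rule form_sym)
  have "form c x1 (y - smul x1 h) = form c x1 y - form c x1 x1 * h"
    by (simp only: form_diff_right form_smul_right[OF hs])
  then show o: "form c x1 (y - smul x1 h) = 0" using u1 h by simp
  have "form c (y - smul x1 h) (y - smul x1 h)
      = form c y (y - smul x1 h) - cnj h * form c x1 (y - smul x1 h)"
    by (simp only: form_diff_left form_smul_left[OF hs])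
  also have "\<dots> = form c y (y - smul x1 h)" by (simp only: o mult_zero_right diff_zero)
  also have "\<dots> = form c y y - cnj h * h"
    by (simp only: form_diff_right form_smul_right[OF hs] hy)
  finally show "form c (y - smul x1 h) (y - smul x1 h) = form c y y - cnj h * h" .
qed

lemma gram_schmidt_frame:
  assumes x: "pure c x" "x \<noteq> 0" and y: "pure c y" and indep: "\<forall>t\<in>scal c. y \<noteq> smul x t"
  obtains a b m where "frame c a b" "m > 0"
    "a = smul x (complex_of_real (1 / norm x))"
    "b = smul (y - smul a (form c a y)) (complex_of_real (1 / m))"
    "y = smul a (form c a y) + smul b (complex_of_real m)"
    "m\<^sup>2 = (norm y)\<^sup>2 - (cmod (form c a y))\<^sup>2"
proof -
  define a where "a = smul x (complex_of_real (1 / norm x))"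
  define h where "h = form c a y"
  define y2 where "y2 = y - smul a h"
  define m where "m = norm y2"
  define b where "b = smul y2 (complex_of_real (1 / m))"
  have a1: "form c a a = 1" unfolding a_def by (rule form_normalize[OF x(2)])
  have pa: "pure c a" unfolding a_def by (rule pure_smul[OF x(1) scal_of_real])
  have hs: "h \<in> scal c" unfolding h_def by (rule form_scal)
  have y2y2: "form c y2 y2 = form c y y - cnj h * h"
    unfolding y2_def by (rule gram_schmidt_step(1)[OF a1 h_def])
  have ay2: "form c a y2 = 0" unfolding y2_def by (rule gram_schmidt_step(2)[OF a1 h_def])
  have y20: "y2 \<noteq> 0"
  proof
    assume "y2 = 0"
    then have "y = smul x (complex_of_real (1 / norm x) * h)" unfolding y2_def a_def
      by (simp add: smul_assoc)
    then show False using indep scal_mult[OF scal_of_real hs] by blast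
  qed
  have py2: "pure c y2" unfolding y2_def by (rule pure_diff[OF y pure_smul[OF pa hs]])
  have pb: "pure c b" unfolding b_def by (rule pure_smul[OF py2 scal_of_real])
  have bb: "form c b b = 1" unfolding b_def m_def by (rule form_normalize[OF y20])
  have ab: "form c a b = 0"
    unfolding b_def by (simp only: form_smul_right[OF scal_of_real] ay2 mult_zero_left)
  have fr: "frame c a b" unfolding frame_def using pa pb a1 bb ab by simp
  have m_pos: "m > 0" using y20 by (simp add: m_def)
  have "smul b (complex_of_real m) = y2" unfolding b_def m_def by (rule smul_normalize_back[OF y20])
  then have y_dec: "y = smul a h + smul b (complex_of_real m)" by (simp add: y2_def)
  have "complex_of_real (m\<^sup>2) = complex_of_real ((norm y)\<^sup>2 - (cmod h)\<^sup>2)"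
    using y2y2 complex_norm_square[of h] by (simp add: m_def form_self_norm mult.commute)
  then have m_sq: "m\<^sup>2 = (norm y)\<^sup>2 - (cmod h)\<^sup>2" by (simp only: of_real_eq_iff)
  show ?thesis
  proof (rule that[OF fr m_pos a_def])
    show "b = smul (y - smul a (form c a y)) (complex_of_real (1 / m))"
      by (simp only: b_def y2_def h_def)
    show "y = smul a (form c a y) + smul b (complex_of_real m)" using y_dec by (simp only: h_def)
    show "m\<^sup>2 = (norm y)\<^sup>2 - (cmod (form c a y))\<^sup>2" using m_sq by (simp only: h_def)
  qed
qed

definition qbasis :: "oct \<Rightarrow> oct \<Rightarrow> nat \<Rightarrow> oct" where
  "qbasis a b i = (if i = 0 then cemb 1 else if i = 1 then a else if i = 2 then b else omul a b)"

text \<open>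
  With e 0 = 1, e 1 = a, e 2 = b, e 3 = ab, the multiplication table is
  e i * e j = qsign i j \<cdot> e (qidx i j).
\<close>

definition qidx :: "nat \<Rightarrow> nat \<Rightarrow> nat" where
  "qidx i j = (if i = 0 then j else if j = 0 then i else if i = j then 0 else 6 - i - j)"

definition qsign :: "nat \<Rightarrow> nat \<Rightarrow> real" where
  "qsign i j = (if i = 0 \<or> j = 0 then 1 else if i = j then -1
     else if (i,j) = (1,2) \<or> (i,j) = (2,3) \<or> (i,j) = (3,1) then 1 else -1)"

lemma less4: "i < (4::nat) \<longleftrightarrow> i = 0 \<or> i = 1 \<or> i = 2 \<or> i = 3" by auto

lemma qbasis_mult_table:
  assumes F: "frame c a b" and ij: "i < 4" "j < 4"
  shows "omul (qbasis a b i) (qbasis a b j) = smul (qbasis a b (qidx i j)) (complex_of_real (qsign i j))"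
  using ij unfolding less4
  by (elim disjE; simp add: qbasis_def qidx_def qsign_def smul_cemb smul_minus_one cemb_neg_omul
      frame_sq1[OF F] frame_sq2[OF F] frame_sq12[OF F] frame_anticomm[OF F]
      frame_1_12[OF F] frame_12_2[OF F] frame_12_1[OF F] frame_2_12[OF F])

lemma qbasis_orthonormal:
  assumes F: "frame c a b" and ij: "i < 4" "j < 4"
  shows "form c (qbasis a b i) (qbasis a b j) = (if i = j then 1 else 0)"
proof -
  note pure = frame_pure1[OF F] frame_pure2[OF F] frame_pure12[OF F]
  have right_one: "form c x (cemb 1) = 0" if "pure c x" for x
    using that form_sym[of c x "cemb 1"] by (simp add: pure_def)
  show ?thesis
    using ij unfolding less4
    by (elim disjE; simp add: qbasis_def form_one_one pure[unfolded pure_def] right_one pure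
        frame_norm1[OF F] frame_norm2[OF F] frame_norm12[OF F] frame_orth[OF F] frame_orth_sym[OF F]
        frame_orth_1_12[OF F] frame_orth_2_12[OF F] form_sym[of c "omul a b" a] form_sym[of c "omul a b" b])
qed

lemma qbasis_pure: "frame c a b \<Longrightarrow> 0 < i \<Longrightarrow> pure c (qbasis a b i)"
  by (auto simp: qbasis_def frame_pure1 frame_pure2 frame_pure12)

lemma qbasis_Aset: "a \<in> Aset c \<Longrightarrow> b \<in> Aset c \<Longrightarrow> qbasis a b i \<in> Aset c"
  by (auto simp: qbasis_def Aset_mul)

lemma qidx_less: "i < 4 \<Longrightarrow> j < 4 \<Longrightarrow> qidx i j < 4" by (auto simp: qidx_def)

lemma qidx_pos: "i < 4 \<Longrightarrow> j < 4 \<Longrightarrow> 0 < i \<Longrightarrow> 0 < j \<Longrightarrow> i \<noteq> j \<Longrightarrow> 0 < qidx i j"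
  by (auto simp: qidx_def)

text \<open>
  Over C a scalar passes a basis element orthogonal to C only as its conjugate,
  x t = cnj t x, so the coefficient of e i * e j in (e i \<alpha>)(e j \<beta>) is twisted.
\<close>

definition twist :: "pair_case \<Rightarrow> nat \<Rightarrow> nat \<Rightarrow> complex \<Rightarrow> complex \<Rightarrow> complex" where
  "twist c i j \<alpha> \<beta> = (case c of RH \<Rightarrow> \<alpha> * \<beta> | CO \<Rightarrow>
     (if i = 0 then (if j = 0 then \<alpha> * \<beta> else cnj \<alpha> * \<beta>) else if j = 0 then \<alpha> * \<beta>
      else if i = j then cnj \<alpha> * \<beta> else cnj \<alpha> * cnj \<beta>))"

lemma twist_scal: "\<alpha> \<in> scal c \<Longrightarrow> \<beta> \<in> scal c \<Longrightarrow> twist c i j \<alpha> \<beta> \<in> scal c"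
  by (cases c) (auto simp: twist_def scal_mult scal_cnj)

lemma qbasis_mult_scaled_CO:
  assumes F: "frame CO a b" and ij: "i < 4" "j < 4"
  shows "omul (smul (qbasis a b i) \<alpha>) (smul (qbasis a b j) \<beta>)
    = smul (omul (qbasis a b i) (qbasis a b j)) (twist CO i j \<alpha> \<beta>)"
proof -
  have pp: "fst (fst (qbasis a b k)) = 0" if "0 < k" for k
    using qbasis_pure[OF F that] pure_CO_fst by blast
  have M: "omul (qbasis a b i) (qbasis a b j)
      = smul (qbasis a b (qidx i j)) (complex_of_real (qsign i j))"
    by (rule qbasis_mult_table[OF F ij])
  have S: "omul (smul (qbasis a b i) \<alpha>) (smul (qbasis a b j) \<beta>) =
      smul (cemb (fst (fst (omul (qbasis a b i) (qbasis a b j))))) (cnj \<alpha> * \<beta>)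
    + smul ((0, snd (fst (omul (qbasis a b i) (qbasis a b j)))), snd (omul (qbasis a b i) (qbasis a
      b j)))
        (cnj \<alpha> * cnj \<beta>)" if "i \<noteq> 0" "j \<noteq> 0"
    using omul_smul_imag[OF pp pp] that by simp
  consider "i = 0" "j = 0" | "i = 0" "j \<noteq> 0" | "i \<noteq> 0" "j = 0" | "i \<noteq> 0" "j \<noteq> 0" "i = j"
    | "i \<noteq> 0" "j \<noteq> 0" "i \<noteq> j" by blast
  then show ?thesis
  proof cases
    case 1
    then show ?thesis by (simp add: qbasis_def smul_cemb omul_cemb_cemb twist_def)
  next
    case 2
    then have "fst (fst (smul (qbasis a b j) \<beta>)) = 0" using pp[of j] by (simp add: fst_fst_smul)
    with 2 show ?thesis
      by (simp add: qbasis_def[of a b 0] smul_cemb cemb_omul_imag smul_assoc twist_def mult.commute)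
  next
    case 3
    then show ?thesis by (simp add: qbasis_def[of a b 0] smul_cemb omul_cemb_eq_smul smul_assoc
      twist_def)
  next
    case 4
    then have "omul (qbasis a b i) (qbasis a b j) = cemb (-1)"
      using M by (simp add: qidx_def qsign_def qbasis_def smul_cemb)
    with 4 S show ?thesis by (simp add: twist_def cemb_coords zero_prod_def smul_def omul_coords)
  next
    case 5
    then have "0 < qidx i j" using qidx_pos[OF ij] by simp
    then have "fst (fst (omul (qbasis a b i) (qbasis a b j))) = 0" using M pp
      by (simp add: fst_fst_smul)
    with 5 S show ?thesis by (simp add: twist_def collapse_zero_C_component cemb_0)
  qed
qed

lemma qbasis_mult_scaled:
  assumes F: "frame c a b" and ij: "i < 4" "j < 4" and s: "\<alpha> \<in> scal c" "\<beta> \<in> scal c"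
  shows "omul (smul (qbasis a b i) \<alpha>) (smul (qbasis a b j) \<beta>)
    = smul (omul (qbasis a b i) (qbasis a b j)) (twist c i j \<alpha> \<beta>)"
proof (cases c)
  case RH
  obtain r where r: "\<alpha> = complex_of_real r" using scal_RH s(1) RH by blast
  obtain q where q: "\<beta> = complex_of_real q" using scal_RH s(2) RH by blast
  show ?thesis by (simp add: RH r q twist_def omul_smul_real_left omul_smul_real_right smul_assoc
    mult.commute)
next
  case CO
  then show ?thesis using qbasis_mult_scaled_CO[OF _ ij] F by simp
qed

section \<open>The F-linear map matching two quaternion bases\<close>

definition qcomb :: "(nat \<Rightarrow> oct) \<Rightarrow> (nat \<Rightarrow> complex) \<Rightarrow> oct" where
  "qcomb g \<alpha> = smul (g 0) (\<alpha> 0) + smul (g 1) (\<alpha> 1) + smul (g 2) (\<alpha> 2) + smul (g 3) (\<alpha> 3)"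

definition qmap :: "pair_case \<Rightarrow> (nat \<Rightarrow> oct) \<Rightarrow> (nat \<Rightarrow> oct) \<Rightarrow> oct \<Rightarrow> oct" where
  "qmap c g f z = qcomb f (\<lambda>k. form c (g k) z)"

lemma form_qbasis_qcomb:
  assumes F: "frame c a b" and k: "k < 4" and s: "\<And>k. \<alpha> k \<in> scal c"
  shows "form c (qbasis a b k) (qcomb (qbasis a b) \<alpha>) = \<alpha> k"
  using qbasis_orthonormal[OF F k, of 0] qbasis_orthonormal[OF F k, of 1]
    qbasis_orthonormal[OF F k, of 2] qbasis_orthonormal[OF F k, of 3] k
  by (auto simp: qcomb_def form_add_right form_smul_right s less4)

lemma form_qcomb_qcomb:
  assumes F: "frame c a b" and s: "\<And>k. \<alpha> k \<in> scal c" "\<And>k. \<beta> k \<in> scal c"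
  shows "form c (qcomb (qbasis a b) \<alpha>) (qcomb (qbasis a b) \<beta>) =
     cnj (\<alpha> 0) * \<beta> 0 + cnj (\<alpha> 1) * \<beta> 1 + cnj (\<alpha> 2) * \<beta> 2 + cnj (\<alpha> 3) * \<beta> 3"
proof -
  let ?w = "qcomb (qbasis a b) \<beta>"
  have "form c (qcomb (qbasis a b) \<alpha>) ?w =
      cnj (\<alpha> 0) * form c (qbasis a b 0) ?w + cnj (\<alpha> 1) * form c (qbasis a b 1) ?w
      + cnj (\<alpha> 2) * form c (qbasis a b 2) ?w + cnj (\<alpha> 3) * form c (qbasis a b 3) ?w"
    unfolding qcomb_def[of _ \<alpha>] by (simp add: form_add_left form_smul_left s)
  then show ?thesis by (simp add: form_qbasis_qcomb[OF F _ s(2)])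
qed

lemma qcomb_add: "qcomb g \<alpha> + qcomb g \<beta> = qcomb g (\<lambda>k. \<alpha> k + \<beta> k)"
  by (simp add: qcomb_def smul_add_right algebra_simps)

lemma qcomb_smul: "smul (qcomb g \<alpha>) t = qcomb g (\<lambda>k. \<alpha> k * t)"
  by (simp add: qcomb_def smul_add_left smul_assoc)

lemma qcomb_Aset: "(\<And>k. g k \<in> Aset c) \<Longrightarrow> qcomb g \<alpha> \<in> Aset c"
  by (simp add: qcomb_def Aset_add Aset_smul)

lemma qmap_add: "qmap c g f (z + w) = qmap c g f z + qmap c g f w"
  by (simp add: qmap_def qcomb_add form_add_right)

lemma qmap_smul: "t \<in> scal c \<Longrightarrow> qmap c g f (smul z t) = smul (qmap c g f z) t"
  by (simp add: qmap_def qcomb_smul form_smul_right)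

lemma qmap_qbasis:
  assumes F: "frame c a b" and k: "k < 4" and t: "t \<in> scal c"
  shows "qmap c (qbasis a b) f (smul (qbasis a b k) t) = smul (f k) t"
  using qbasis_orthonormal[OF F _ k, of 0] qbasis_orthonormal[OF F _ k, of 1]
    qbasis_orthonormal[OF F _ k, of 2] qbasis_orthonormal[OF F _ k, of 3] k
  by (auto simp: qmap_def qcomb_def form_smul_right t less4)

lemma qmap_qcomb:
  assumes G: "frame c a b" and s: "\<And>k. \<alpha> k \<in> scal c"
  shows "qmap c (qbasis a b) f (qcomb (qbasis a b) \<alpha>) = qcomb f \<alpha>"
  by (simp add: qmap_def qcomb_def[of f] form_qbasis_qcomb[OF G _ s])

lemma orthonormal_blocks_perp_zero:
  fixes G H :: "nat \<Rightarrow> oct"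
  assumes GG: "\<And>i j. i < 4 \<Longrightarrow> j < 4 \<Longrightarrow> inner (G i) (G j) = (if i = j then 1 else 0)"
    and HH: "\<And>i j. i < 4 \<Longrightarrow> j < 4 \<Longrightarrow> inner (H i) (H j) = (if i = j then 1 else 0)"
    and GH: "\<And>i j. i < 4 \<Longrightarrow> j < 4 \<Longrightarrow> inner (G i) (H j) = 0"
    and Gw: "\<And>i. i < 4 \<Longrightarrow> inner (G i) w = 0" and Hw: "\<And>i. i < 4 \<Longrightarrow> inner (H i) w = 0"
  shows "w = 0"
proof (rule orthonormal_list_perp_zero[of "map G [0..<4] @ map H [0..<4]"])
  let ?L = "map G [0..<4] @ map H [0..<4]"
  have nth: "?L ! i = (if i < 4 then G i else H (i - 4))" if "i < 8" for i
    using that by (simp add: nth_append)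
  show "length ?L = DIM(oct)" by simp
  show "inner (?L!i) (?L!j) = (if i = j then 1 else 0)" if "i < length ?L" "j < length ?L" for i j
    using that GG[of i j] HH[of "i - 4" "j - 4"] GH[of i "j - 4"] GH[of j "i - 4"]
    by (auto simp: nth inner_commute)
  show "inner (?L!i) w = 0" if "i < length ?L" for i
    using that Gw[of i] Hw[of "i - 4"] by (simp add: nth)
qed

lemma qbasis_perp_zero:
  assumes F: "frame c a b" and A: "a \<in> Aset c" "b \<in> Aset c" "w \<in> Aset c"
    and perp: "\<And>k. k < 4 \<Longrightarrow> form c (qbasis a b k) w = 0"
  shows "w = 0"
proof -
  have GG: "inner (qbasis a b i) (qbasis a b j) = (if i = j then 1 else 0)" if "i < 4" "j < 4" for i
    j
    unfolding form_Re[of c, symmetric] qbasis_orthonormal[OF F that] by simp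
  have Gw: "inner (qbasis a b i) w = 0" if "i < 4" for i
    unfolding form_Re[of c, symmetric] perp[OF that] by simp
  show ?thesis
  proof (cases c)
    case RH
    \<comment> \<open>complete the basis of H by an orthonormal basis of its complement in O\<close>
    define E :: "nat \<Rightarrow> oct" where
      "E k = (if k = 0 then ((0,0),(1,0)) else if k = 1 then ((0,0),(\<i>,0))
              else if k = 2 then ((0,0),(0,1)) else ((0,0),(0,\<i>)))" for k
    have perp_E: "inner x (E k) = 0" if "snd x = (0,0)" for x k
      using that by (cases x) (simp add: E_def flip: zero_prod_def)
    have sB: "snd (qbasis a b k) = (0,0)" for k using qbasis_Aset[OF A(1,2)] RH Aset_RH by blast
    have sw: "snd w = (0,0)" using A(3) RH Aset_RH by blast
    show ?thesis
    proof (rule orthonormal_blocks_perp_zero[OF GG _ _ Gw])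
      show "inner (E i) (E j) = (if i = j then 1 else 0)" if "i < 4" "j < 4" for i j
        using that by (auto simp: less4 E_def inner_complex_def)
      show "inner (qbasis a b i) (E j) = 0" for i j by (rule perp_E[OF sB])
      show "inner (E i) w = 0" for i by (simp add: inner_commute perp_E[OF sw])
    qed
  next
    case CO
    \<comment> \<open>the basis and its multiples by \<i> form a real orthonormal basis of O\<close>
    have i: "\<i> \<in> scal c" by (simp add: scal_def CO)
    have Re_form: "inner x y = Re (form c x y)" for x y by (simp add: form_Re)
    show ?thesis
    proof (rule orthonormal_blocks_perp_zero[OF GG _ _ Gw])
      show "inner (smul (qbasis a b i) \<i>) (smul (qbasis a b j) \<i>) = (if i = j then 1 else 0)"
        if "i < 4" "j < 4" for i j
        using qbasis_orthonormal[OF F that] by (simp add: Re_form form_smul_left form_smul_right i)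
      show "inner (qbasis a b i) (smul (qbasis a b j) \<i>) = 0" if "i < 4" "j < 4" for i j
        using qbasis_orthonormal[OF F that] by (simp add: Re_form form_smul_right i)
      show "inner (smul (qbasis a b i) \<i>) w = 0" if "i < 4" for i
        using perp[OF that] by (simp add: Re_form form_smul_left i)
    qed
  qed
qed

lemma qcomb_expansion:
  assumes F: "frame c a b" and A: "a \<in> Aset c" "b \<in> Aset c" and z: "z \<in> Aset c"
  shows "z = qcomb (qbasis a b) (\<lambda>k. form c (qbasis a b k) z)"
proof -
  let ?S = "qcomb (qbasis a b) (\<lambda>k. form c (qbasis a b k) z)"
  have "z - ?S = 0"
  proof (rule qbasis_perp_zero[OF F A])
    show "z - ?S \<in> Aset c"
      by (rule Aset_diff[OF z qcomb_Aset[OF qbasis_Aset[OF A]]])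
    show "form c (qbasis a b k) (z - ?S) = 0" if "k < 4" for k
      using form_qbasis_qcomb[OF F that, of "\<lambda>k. form c (qbasis a b k) z"]
      by (simp add: form_diff_right form_scal)
  qed
  then show ?thesis by simp
qed

lemma qmap_mult_qbasis:
  assumes G: "frame c a b" and F: "frame c u v" and ij: "i < 4" "j < 4"
    and pq: "p \<in> scal c" "q \<in> scal c"
  shows "qmap c (qbasis a b) (qbasis u v) (omul (smul (qbasis a b i) p) (smul (qbasis a b j) q))
      = omul (smul (qbasis u v i) p) (smul (qbasis u v j) q)"
proof -
  have k: "qidx i j < 4" using qidx_less[OF ij] .
  have e: "complex_of_real (qsign i j) * twist c i j p q \<in> scal c"
    by (simp add: scal_mult twist_scal pq)
  have "qmap c (qbasis a b) (qbasis u v) (omul (smul (qbasis a b i) p) (smul (qbasis a b j) q))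
      = qmap c (qbasis a b) (qbasis u v)
          (smul (qbasis a b (qidx i j)) (complex_of_real (qsign i j) * twist c i j p q))"
    by (simp add: qbasis_mult_scaled[OF G ij pq] qbasis_mult_table[OF G ij] smul_assoc)
  also have "\<dots> = smul (qbasis u v (qidx i j)) (complex_of_real (qsign i j) * twist c i j p q)"
    by (rule qmap_qbasis[OF G k e])
  also have "\<dots> = omul (smul (qbasis u v i) p) (smul (qbasis u v j) q)"
    by (simp add: qbasis_mult_scaled[OF F ij pq] qbasis_mult_table[OF F ij] smul_assoc)
  finally show ?thesis .
qed

lemma qmap_mult:
  assumes G: "frame c a b" and F: "frame c u v" and A: "a \<in> Aset c" "b \<in> Aset c"
    and zw: "z \<in> Aset c" "w \<in> Aset c"
  shows "qmap c (qbasis a b) (qbasis u v) (omul z w)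
      = omul (qmap c (qbasis a b) (qbasis u v) z) (qmap c (qbasis a b) (qbasis u v) w)"
proof -
  define \<alpha> where "\<alpha> = (\<lambda>k. form c (qbasis a b k) z)"
  define \<beta> where "\<beta> = (\<lambda>k. form c (qbasis a b k) w)"
  have sa: "\<And>k. \<alpha> k \<in> scal c" and sb: "\<And>k. \<beta> k \<in> scal c" by (simp_all add: \<alpha>_def \<beta>_def form_scal)
  have z: "z = qcomb (qbasis a b) \<alpha>" unfolding \<alpha>_def by (rule qcomb_expansion[OF G A zw(1)])
  have w: "w = qcomb (qbasis a b) \<beta>" unfolding \<beta>_def by (rule qcomb_expansion[OF G A zw(2)])
  have "qmap c (qbasis a b) (qbasis u v) (omul (qcomb (qbasis a b) \<alpha>) (qcomb (qbasis a b) \<beta>))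
      = omul (qcomb (qbasis u v) \<alpha>) (qcomb (qbasis u v) \<beta>)"
    unfolding qcomb_def
    by (simp add: omul_add_left omul_add_right qmap_add qmap_mult_qbasis[OF G F] sa sb)
  then show ?thesis unfolding z w by (simp add: qmap_qcomb[OF G sa] qmap_qcomb[OF G sb])
qed

lemma qmap_form:
  assumes G: "frame c a b" and F: "frame c u v" and A: "a \<in> Aset c" "b \<in> Aset c"
    and zw: "z \<in> Aset c" "w \<in> Aset c"
  shows "form c (qmap c (qbasis a b) (qbasis u v) z) (qmap c (qbasis a b) (qbasis u v) w)
      = form c z w"
proof -
  define \<alpha> where "\<alpha> = (\<lambda>k. form c (qbasis a b k) z)"
  define \<beta> where "\<beta> = (\<lambda>k. form c (qbasis a b k) w)"
  have sa: "\<And>k. \<alpha> k \<in> scal c" and sb: "\<And>k. \<beta> k \<in> scal c" by (simp_all add: \<alpha>_def \<beta>_def form_scal)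
  have z: "z = qcomb (qbasis a b) \<alpha>" unfolding \<alpha>_def by (rule qcomb_expansion[OF G A zw(1)])
  have w: "w = qcomb (qbasis a b) \<beta>" unfolding \<beta>_def by (rule qcomb_expansion[OF G A zw(2)])
  show ?thesis unfolding z w by (simp add: qmap_qcomb[OF G sa] qmap_qcomb[OF G sb]
    form_qcomb_qcomb[OF G sa sb] form_qcomb_qcomb[OF F sa sb])
qed

lemma qmap_sharp:
  assumes G: "frame c a b" and F: "frame c u v" and A: "a \<in> Aset c" "b \<in> Aset c"
  shows "sharp c (qmap c (qbasis a b) (qbasis u v))"
  unfolding sharp_def oadd_eq_plus Fset_scal herm_eq_cemb_form
  by (auto simp: qmap_add omul_cemb_eq_smul qmap_smul qmap_mult[OF G F A] qmap_form[OF G F A])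

context
  fixes c \<psi> assumes sh: "sharp c \<psi>"
begin

lemma sharp_add: "x \<in> Aset c \<Longrightarrow> y \<in> Aset c \<Longrightarrow> \<psi> (x + y) = \<psi> x + \<psi> y"
  using sh by (simp add: sharp_def oadd_eq_plus)

lemma sharp_smul: "x \<in> Aset c \<Longrightarrow> t \<in> scal c \<Longrightarrow> \<psi> (smul x t) = smul (\<psi> x) t"
  using sh by (auto simp: sharp_def Fset_scal smul_def)

lemma sharp_mul: "x \<in> Aset c \<Longrightarrow> y \<in> Aset c \<Longrightarrow> \<psi> (omul x y) = omul (\<psi> x) (\<psi> y)"
  using sh by (simp add: sharp_def)

lemma sharp_form: "x \<in> Aset c \<Longrightarrow> y \<in> Aset c \<Longrightarrow> form c (\<psi> x) (\<psi> y) = form c x y"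
  using sh by (simp add: sharp_def herm_eq_cemb_form cemb_eq_iff)

lemma sharp_neg: "x \<in> Aset c \<Longrightarrow> \<psi> (- x) = - \<psi> x"
  using sharp_smul[of x "-1"] by (simp add: smul_minus_one scal_minus)
lemma sharp_diff: "x \<in> Aset c \<Longrightarrow> y \<in> Aset c \<Longrightarrow> \<psi> (x - y) = \<psi> x - \<psi> y"
  using sharp_add[of x "- y"] sharp_neg[of y] Aset_smul[of y c "-1"] by (simp add: smul_minus_one)

lemma sharp_qcomb:
  "(\<And>k. g k \<in> Aset c) \<Longrightarrow> (\<And>k. \<alpha> k \<in> scal c) \<Longrightarrow> \<psi> (qcomb g \<alpha>) = qcomb (\<lambda>k. \<psi> (g k)) \<alpha>"
  unfolding qcomb_def by (simp add: sharp_add sharp_smul Aset_add Aset_smul)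

end

lemma sharp_eq_qmap:
  assumes sh: "sharp c \<psi>" and F: "frame c a b" "frame c a' b'" and A: "a \<in> Aset c" "b \<in> Aset c"
    and ab: "\<psi> a = a'" "\<psi> b = b'" and z: "z \<in> Aset c"
  shows "\<psi> z = qmap c (qbasis a b) (qbasis a' b') z"
proof -
  have "cemb 1 = - omul a a" using frame_sq1[OF F(1)] by simp
  then have "\<psi> (cemb 1) = - omul a' a'"
    using sharp_neg[OF sh Aset_mul[OF A(1) A(1)]] sharp_mul[OF sh A(1) A(1)] ab by simp
  then have "\<psi> (cemb 1) = cemb 1" using frame_sq1[OF F(2)] by simp
  then have basis: "\<psi> (qbasis a b k) = qbasis a' b' k" for k
    using sharp_mul[OF sh A] ab by (simp add: qbasis_def)
  define \<alpha> where "\<alpha> = (\<lambda>k. form c (qbasis a b k) z)"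
  have s\<alpha>: "\<And>k. \<alpha> k \<in> scal c" by (simp add: \<alpha>_def form_scal)
  have z_eq: "z = qcomb (qbasis a b) \<alpha>" unfolding \<alpha>_def by (rule qcomb_expansion[OF F(1) A z])
  have "\<psi> z = qcomb (qbasis a' b') \<alpha>"
    unfolding z_eq by (simp add: sharp_qcomb[OF sh qbasis_Aset[OF A] s\<alpha>] basis)
  also have "\<dots> = qmap c (qbasis a b) (qbasis a' b') z" unfolding z_eq
    by (rule qmap_qcomb[OF F(1) s\<alpha>, symmetric])
  finally show ?thesis .
qed

section \<open>Lines and planes\<close>

lemma line_set_alt: "line_set c x u = {(smul x s, smul u s) | s. s \<in> scal c \<and> s \<noteq> 0}"
  unfolding line_set_def Fset_scal smul_def ozero_eq_zero using cemb_eq_0_iff by blast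

lemma point_set_alt: "point_set c x = {smul x s | s. s \<in> scal c}"
  unfolding point_set_def Fset_scal smul_def by blast

lemma point_set_self: "p \<in> point_set c p"
  unfolding point_set_alt by (rule CollectI, rule exI[of _ 1]) simp

lemma line_set_eq_scaled:
  assumes "line_set c x u = line_set c x' u'"
  shows "\<exists>t \<in> scal c. t \<noteq> 0 \<and> x' = smul x t \<and> u' = smul u t"
proof -
  have "(x', u') \<in> line_set c x' u'" unfolding line_set_alt
    by (rule CollectI, rule exI[of _ 1]) simp
  then have "(x', u') \<in> line_set c x u" using assms by simp
  then show ?thesis unfolding line_set_alt by auto
qed

lemma line_set_smul:
  assumes t: "t \<in> scal c" "t \<noteq> 0"
  shows "line_set c (smul x t) (smul u t) = line_set c x u"
proof
  show "line_set c (smul x t) (smul u t) \<subseteq> line_set c x u"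
    unfolding line_set_alt using t by (auto simp: smul_assoc scal_mult)
  show "line_set c x u \<subseteq> line_set c (smul x t) (smul u t)"
  proof
    fix p assume "p \<in> line_set c x u"
    then obtain s where s: "s \<in> scal c" "s \<noteq> 0" "p = (smul x s, smul u s)" unfolding line_set_alt
      by auto
    have e: "t * (inverse t * s) = s" using t by (simp add: field_simps)
    have "p = (smul (smul x t) (inverse t * s), smul (smul u t) (inverse t * s))"
      unfolding s(3) by (simp only: smul_assoc e)
    moreover have "inverse t * s \<in> scal c" "inverse t * s \<noteq> 0" using s t
      by (auto simp: scal_mult scal_inverse)
    ultimately show "p \<in> line_set c (smul x t) (smul u t)" unfolding line_set_alt by blast
  qed
qed

lemma point_set_smul:
  assumes t: "t \<in> scal c" "t \<noteq> 0"
  shows "point_set c (smul x t) = point_set c x"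
proof
  show "point_set c (smul x t) \<subseteq> point_set c x"
    unfolding point_set_alt using t by (auto simp: smul_assoc scal_mult)
  show "point_set c x \<subseteq> point_set c (smul x t)"
  proof
    fix p assume "p \<in> point_set c x"
    then obtain s where s: "s \<in> scal c" "p = smul x s" unfolding point_set_alt by auto
    have e: "t * (inverse t * s) = s" using t by (simp add: field_simps)
    have "p = smul (smul x t) (inverse t * s)" unfolding s(2) by (simp only: smul_assoc e)
    moreover have "inverse t * s \<in> scal c" using s t by (auto simp: scal_mult scal_inverse)
    ultimately show "p \<in> point_set c (smul x t)" unfolding point_set_alt by blast
  qed
qed

lemma line_paramsD:
  assumes "line_params c x u"
  shows "x \<in> Aset c" "pure c x" "pure c u" "norm x = norm u" "x \<noteq> 0" "u \<noteq> 0"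
  using assms by (auto simp: line_params_def Pu_iff_pure onorm_eq_norm)

lemma smul_of_equal_gram:
  assumes norms: "norm u = norm x" "norm v = norm y" and H: "form c u v = form c x y"
    and t: "t \<in> scal c" and y: "y = smul x t"
  shows "v = smul u t"
proof -
  have xx: "cnj (form c x x) = form c x x" by (metis form_sym)
  have uu: "form c u u = form c x x" using norms(1) by (simp add: form_self_norm)
  have "form c v v = form c y y" using norms(2) by (simp add: form_self_norm)
  then have vv: "form c v v = cnj t * form c x x * t"
    using t by (simp add: y form_smul_left form_smul_right mult.assoc)
  have uv: "form c u v = form c x x * t" using H y t by (simp add: form_smul_right)
  have "form c (v - smul u t) (v - smul u t)
      = form c v v - cnj (form c u v) * t - cnj t * form c u v + cnj t * form c u u * t"
    by (simp add: form_diff_left form_diff_right form_smul_left form_smul_right t form_sym[of c v u]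
        algebra_simps)
  also have "\<dots> = 0" by (simp add: vv uv uu xx algebra_simps)
  finally show ?thesis by (simp add: form_self_zero)
qed

lemma distinct_lines_independent:
  assumes LP1: "line_params c x u" and LP2: "line_params c y v"
    and dist: "line_set c x u \<noteq> line_set c y v" and H: "form c x y = form c u v"
  shows "\<forall>t\<in>scal c. y \<noteq> smul x t" and "\<forall>t\<in>scal c. v \<noteq> smul u t"
proof -
  note X = line_paramsD[OF LP1] and Y = line_paramsD[OF LP2]
  have same: "y = smul x t \<longleftrightarrow> v = smul u t" if t: "t \<in> scal c" for t
    using smul_of_equal_gram[OF X(4)[symmetric] Y(4)[symmetric] H[symmetric] t]
      smul_of_equal_gram[OF X(4) Y(4) H t]
    by blast
  show indep: "\<forall>t\<in>scal c. y \<noteq> smul x t"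
  proof (intro ballI notI)
    fix t assume t: "t \<in> scal c" and y: "y = smul x t"
    then have "t \<noteq> 0" using Y(5) by auto
    moreover have "v = smul u t" using same[OF t] y by blast
    ultimately have "line_set c y v = line_set c x u" using y line_set_smul[OF t] by simp
    then show False using dist by simp
  qed
  then show "\<forall>t\<in>scal c. v \<noteq> smul u t" using same by blast
qed

lemma sharp_through_two_lines:
  assumes LP1: "line_params c x u" and LP2: "line_params c y v"
    and dist: "line_set c x u \<noteq> line_set c y v" and H: "form c x y = form c u v"
  obtains \<phi> where "sharp c \<phi>" "\<phi> x = u" "\<phi> y = v"
    "\<And>\<psi> z. sharp c \<psi> \<Longrightarrow> \<psi> x = u \<Longrightarrow> \<psi> y = v \<Longrightarrow> z \<in> Aset c \<Longrightarrow> \<psi> z = \<phi> z"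
proof -
  note X = line_paramsD[OF LP1] and Y = line_paramsD[OF LP2]
  obtain a b m where G: "frame c a b" "m > 0" and a: "a = smul x (complex_of_real (1 / norm x))"
    and b: "b = smul (y - smul a (form c a y)) (complex_of_real (1 / m))"
    and y: "y = smul a (form c a y) + smul b (complex_of_real m)"
    and m: "m\<^sup>2 = (norm y)\<^sup>2 - (cmod (form c a y))\<^sup>2"
    by (rule gram_schmidt_frame[OF X(2,5) Y(2) distinct_lines_independent(1)[OF LP1 LP2 dist H]])
  obtain a' b' m' where G': "frame c a' b'" "m' > 0"
    and a': "a' = smul u (complex_of_real (1 / norm u))"
    and b': "b' = smul (v - smul a' (form c a' v)) (complex_of_real (1 / m'))"
    and v: "v = smul a' (form c a' v) + smul b' (complex_of_real m')"
    and m': "m'\<^sup>2 = (norm v)\<^sup>2 - (cmod (form c a' v))\<^sup>2"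
    by (rule gram_schmidt_frame[OF X(3,6) Y(3) distinct_lines_independent(2)[OF LP1 LP2 dist H]])
  define h where "h = form c a y"
  have hs: "h \<in> scal c" unfolding h_def by (rule form_scal)
  have h: "form c a' v = h" unfolding h_def a a' X(4)
    by (simp only: form_smul_left[OF scal_of_real] H)
  have "m'\<^sup>2 = m\<^sup>2" using m m' h Y(4) by (simp add: h_def)
  then have "m' = m" using G(2) G'(2) by (metis less_imp_le power2_eq_iff_nonneg)
  note b = b[folded h_def] and y = y[folded h_def] and b' = b'[unfolded h this]
    and v = v[unfolded h this]
  have A: "a \<in> Aset c" "b \<in> Aset c" using X(1) Y(1) by (simp_all add: a b Aset_smul Aset_diff)
  have xa: "x = smul a (complex_of_real (norm x))" unfolding a
    by (rule smul_normalize_back[OF X(5), symmetric])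
  have ua: "u = smul a' (complex_of_real (norm x))" unfolding a' X(4)
    by (rule smul_normalize_back[OF X(6), symmetric])
  define \<phi> where "\<phi> = qmap c (qbasis a b) (qbasis a' b')"
  have basis: "\<phi> (smul (qbasis a b k) t) = smul (qbasis a' b' k) t" if "k < 4" "t \<in> scal c" for k t
    unfolding \<phi>_def by (rule qmap_qbasis[OF G(1) that])
  have \<phi>x: "\<phi> x = u" using basis[of 1 "complex_of_real (norm x)"] xa ua by (simp add: qbasis_def)
  have \<phi>y: "\<phi> y = v"
    using basis[of 1 h] basis[of 2 "complex_of_real m"] hs y v
    by (simp add: \<phi>_def qmap_add qbasis_def)
  have \<psi>ab: "\<psi> a = a' \<and> \<psi> b = b'" if \<psi>: "sharp c \<psi>" "\<psi> x = u" "\<psi> y = v" for \<psi>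
  proof
    show \<psi>a: "\<psi> a = a'"
      unfolding a a' X(4) by (simp only: sharp_smul[OF \<psi>(1) X(1) scal_of_real] \<psi>(2))
    have "\<psi> (y - smul a h) = v - smul a' h"
      using sharp_diff[OF \<psi>(1) Y(1) Aset_smul[OF A(1)]] sharp_smul[OF \<psi>(1) A(1) hs] \<psi>(3) \<psi>a by simp
    then show "\<psi> b = b'"
      unfolding b b' by (simp only:
        sharp_smul[OF \<psi>(1) Aset_diff[OF Y(1) Aset_smul[OF A(1)]] scal_of_real])
  qed
  show ?thesis
  proof (rule that[OF _ \<phi>x \<phi>y])
    show "sharp c \<phi>" unfolding \<phi>_def by (rule qmap_sharp[OF G(1) G'(1) A])
    show "\<psi> z = \<phi> z" if "sharp c \<psi>" "\<psi> x = u" "\<psi> y = v" "z \<in> Aset c" for \<psi> z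
      using sharp_eq_qmap[OF that(1) G(1) G'(1) A _ _ that(4)] \<psi>ab[OF that(1-3)] unfolding \<phi>_def
      by blast
  qed
qed

lemma inc_line_plane_eval:
  assumes sh: "sharp c \<psi>" and lp: "line_params c x u" and inc: "inc_line_plane c (line_set c x u) \<psi>"
  shows "\<psi> x = u"
proof -
  obtain x' u' where a: "line_set c x' u' = line_set c x u" "\<psi> x' = u'"
    using inc unfolding inc_line_plane_def by metis
  obtain t where t: "t \<in> scal c" "t \<noteq> 0" "x' = smul x t" "u' = smul u t"
    using line_set_eq_scaled[of c x u x' u'] a(1) by auto
  have "smul (\<psi> x) t = smul u t" using sharp_smul[OF sh line_paramsD(1)[OF lp] t(1)] a(2) t by simp
  then show ?thesis using smul_cancel t(2) by blast
qed

lemma inc_line_planeI: "line_params c x u \<Longrightarrow> \<phi> x = u \<Longrightarrow> inc_line_plane c (line_set c x u) \<phi>"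
  unfolding inc_line_plane_def by blast

lemma coplanar_iff_herm_eq:
  assumes LP1: "line_params c x u" and LP2: "line_params c y v"
    and dist: "line_set c x u \<noteq> line_set c y v"
  shows "(\<exists>\<phi>. sharp c \<phi> \<and> inc_line_plane c (line_set c x u) \<phi> \<and> inc_line_plane c (line_set c y v) \<phi>)
    \<longleftrightarrow> herm c x y = herm c u v"
proof
  assume "\<exists>\<phi>. sharp c \<phi> \<and> inc_line_plane c (line_set c x u) \<phi> \<and> inc_line_plane c (line_set c y v) \<phi>"
  then obtain \<psi> where "sharp c \<psi>" "\<psi> x = u" "\<psi> y = v"
    using inc_line_plane_eval[OF _ LP1] inc_line_plane_eval[OF _ LP2] by blast
  then show "herm c x y = herm c u v"
    using sharp_form[of c \<psi> x y] line_paramsD(1)[OF LP1] line_paramsD(1)[OF LP2]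
    by (simp add: herm_eq_iff_form_eq)
next
  assume "herm c x y = herm c u v"
  then obtain \<phi> where "sharp c \<phi>" "\<phi> x = u" "\<phi> y = v"
    using sharp_through_two_lines[OF LP1 LP2 dist] by (metis herm_eq_iff_form_eq)
  then show "\<exists>\<phi>. sharp c \<phi> \<and> inc_line_plane c (line_set c x u) \<phi>
      \<and> inc_line_plane c (line_set c y v) \<phi>"
    using inc_line_planeI[OF LP1] inc_line_planeI[OF LP2] by blast
qed

lemma unique_common_plane:
  assumes LP1: "line_params c x u" and LP2: "line_params c y v"
    and dist: "line_set c x u \<noteq> line_set c y v"
    and H: "herm c x y = herm c u v"
  shows "\<exists>\<phi>. sharp c \<phi> \<and> \<phi> x = u \<and> \<phi> y = v \<and>
    (\<forall>\<psi>. sharp c \<psi> \<and> \<psi> x = u \<and> \<psi> y = v \<longrightarrow> (\<forall>z \<in> Aset c. \<psi> z = \<phi> z)) \<and>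
    (\<forall>\<psi>. sharp c \<psi> \<and> inc_line_plane c (line_set c x u) \<psi> \<and> inc_line_plane c (line_set c y v) \<psi>
       \<longrightarrow> (\<forall>z \<in> Aset c. \<psi> z = \<phi> z))"
proof -
  obtain \<phi> where "sharp c \<phi>" "\<phi> x = u" "\<phi> y = v"
    and uniq: "\<And>\<psi> z. sharp c \<psi> \<Longrightarrow> \<psi> x = u \<Longrightarrow> \<psi> y = v \<Longrightarrow> z \<in> Aset c \<Longrightarrow> \<psi> z = \<phi> z"
    using sharp_through_two_lines[OF LP1 LP2 dist] H by (metis herm_eq_iff_form_eq)
  then show ?thesis
    using inc_line_plane_eval[OF _ LP1] inc_line_plane_eval[OF _ LP2] by blast
qed

section \<open>Points and lines\<close>

lemma perp_frame_eq_smul: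
  assumes F: "frame c a b" and A: "a \<in> Aset c" "b \<in> Aset c"
    and w: "w \<in> Aset c" "pure c w" "form c w a = 0" "form c w b = 0"
  shows "w = smul (omul a b) (form c (omul a b) w)"
proof -
  have "w = qcomb (qbasis a b) (\<lambda>k. form c (qbasis a b k) w)" by (rule qcomb_expansion[OF F A w(1)])
  moreover have "form c (cemb 1) w = 0" using w(2) by (simp add: pure_def)
  moreover have "form c a w = 0" "form c b w = 0" using w(3,4) form_sym[of c _ w] by auto
  ultimately show ?thesis by (simp add: qcomb_def qbasis_def)
qed

lemma perp_two_points_unique:
  assumes p: "pure c p" "p \<noteq> 0" and q: "pure c q" and indep: "\<forall>t\<in>scal c. q \<noteq> smul p t"
    and pq: "p \<in> Aset c" "q \<in> Aset c"
    and x: "x \<in> Aset c" "pure c x" "x \<noteq> 0" "form c x p = 0" "form c x q = 0"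
    and x': "x' \<in> Aset c" "pure c x'" "form c x' p = 0" "form c x' q = 0"
  shows "\<exists>s\<in>scal c. x' = smul x s"
proof -
  obtain a b m where F: "frame c a b" and a: "a = smul p (complex_of_real (1 / norm p))"
    and b: "b = smul (q - smul a (form c a q)) (complex_of_real (1 / m))"
    using gram_schmidt_frame[OF p q indep] by blast
  have A: "a \<in> Aset c" "b \<in> Aset c" using pq by (simp_all add: a b Aset_smul Aset_diff)
  have rep: "w = smul (omul a b) (form c (omul a b) w)"
    if "w \<in> Aset c" "pure c w" "form c w p = 0" "form c w q = 0" for w
  proof (rule perp_frame_eq_smul[OF F A that(1,2)])
    show wa: "form c w a = 0"
      using that(3) by (simp only: a form_smul_right[OF scal_of_real] mult_zero_left)
    show "form c w b = 0"
      using that(4) wa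
      by (simp only: b form_smul_right[OF scal_of_real] form_smul_right[OF form_scal]
          form_diff_right mult_zero_left diff_zero)
  qed
  define \<alpha> \<beta> where "\<alpha> = form c (omul a b) x" and "\<beta> = form c (omul a b) x'"
  have xr: "x = smul (omul a b) \<alpha>" and x'r: "x' = smul (omul a b) \<beta>"
    unfolding \<alpha>_def \<beta>_def using rep x x' by blast+
  have "\<alpha> \<noteq> 0" using xr x(3) by auto
  then have cancel: "\<alpha> * (inverse \<alpha> * \<beta>) = \<beta>" by (simp add: field_simps)
  have "x' = smul x (inverse \<alpha> * \<beta>)" by (simp only: xr x'r smul_assoc cancel)
  moreover have "inverse \<alpha> * \<beta> \<in> scal c" by (simp add: \<alpha>_def \<beta>_def scal_mult scal_inverse form_scal)
  ultimately show ?thesis by blast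
qed

lemma inc_point_lineE:
  assumes "inc_point_line c P L" "line_params c x u" "L = line_set c x u"
  obtains p where "p \<in> Aset c" "pure c p" "p \<noteq> 0" "P = point_set c p" "form c x p = 0"
proof -
  obtain x0 u0 y where a: "line_params c x0 u0" "L = line_set c x0 u0" "y \<in> Pu c (Aset c)"
    "y \<noteq> ozero" "P = point_set c y" "herm c x0 y = ozero"
    using assms(1) unfolding inc_point_line_def by blast
  obtain t where t: "t \<in> scal c" "x = smul x0 t"
    using line_set_eq_scaled[of c x0 u0 x u] a(2) assms(3) by auto
  have "form c x y = 0" using a(6) t by (simp add: herm_eq_ozero_iff form_smul_left)
  moreover have "y \<in> Aset c" "pure c y" "y \<noteq> 0" using a(3,4)
    by (auto simp: Pu_iff_pure ozero_eq_zero)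
  ultimately show ?thesis using that a(5) by blast
qed

lemma inc_point_lineI:
  assumes "line_params c x u" "L = line_set c x u" "r \<in> Aset c" "pure c r" "r \<noteq> 0" "R
      = point_set c r"
    "form c x r = 0"
  shows "inc_point_line c R L"
proof -
  have "r \<in> Pu c (Aset c)" "r \<noteq> ozero" "herm c x r = ozero"
    using assms by (auto simp: Pu_iff_pure ozero_eq_zero herm_eq_cemb_form cemb_0)
  then show ?thesis unfolding inc_point_line_def using assms(1,2,6) by blast
qed

lemma inc_point_line_transfer:
  assumes L: "is_line c L" and M: "is_line c M" and PQ: "P \<noteq> Q"
    and i: "inc_point_line c P L" "inc_point_line c Q L" "inc_point_line c P M"
      "inc_point_line c Q M"
    and R: "inc_point_line c R L"
  shows "inc_point_line c R M"
proof -
  obtain xL uL where l: "line_params c xL uL" "L = line_set c xL uL" using L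
    by (auto simp: is_line_def)
  obtain xM uM where m: "line_params c xM uM" "M = line_set c xM uM" using M
    by (auto simp: is_line_def)
  obtain p where p: "p \<in> Aset c" "pure c p" "p \<noteq> 0" "P = point_set c p" "form c xL p = 0"
    using inc_point_lineE[OF i(1) l] .
  obtain q where q: "q \<in> Aset c" "pure c q" "q \<noteq> 0" "Q = point_set c q" "form c xL q = 0"
    using inc_point_lineE[OF i(2) l] .
  obtain p' where p': "P = point_set c p'" "form c xM p' = 0"
    using inc_point_lineE[OF i(3) m] .
  obtain q' where q': "Q = point_set c q'" "form c xM q' = 0"
    using inc_point_lineE[OF i(4) m] .
  obtain r where r: "r \<in> Aset c" "pure c r" "r \<noteq> 0" "R = point_set c r" "form c xL r = 0"
    using inc_point_lineE[OF R l] .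
  have perp_M: "form c xM z = 0" if "point_set c z = point_set c z'" "form c xM z' = 0" for z z'
  proof -
    have "z \<in> point_set c z'" using point_set_self[of z c] that(1) by simp
    then obtain s where "s \<in> scal c" "z = smul z' s" unfolding point_set_alt by blast
    then show ?thesis using that(2) by (simp add: form_smul_right)
  qed
  have Mp: "form c xM p = 0" using perp_M[of p p'] p(4) p' by metis
  have Mq: "form c xM q = 0" using perp_M[of q q'] q(4) q' by metis
  have indep: "\<forall>t\<in>scal c. q \<noteq> smul p t"
  proof (intro ballI notI)
    fix t assume t: "t \<in> scal c" and "q = smul p t"
    moreover from this have "t \<noteq> 0" using q(3) by auto
    ultimately have "Q = P" using point_set_smul[OF t] p(4) q(4) by simp
    then show False using PQ by simp
  qed
  note XL = line_paramsD[OF l(1)] and XM = line_paramsD[OF m(1)]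
  obtain s where "s \<in> scal c" "xM = smul xL s"
    using perp_two_points_unique[OF p(2,3) q(2) indep p(1) q(1) XL(1,2,5) p(5) q(5) XM(1,2) Mp Mq]
    by blast
  then have "form c xM r = 0" using r(5) by (simp add: form_smul_left)
  then show ?thesis by (rule inc_point_lineI[OF m r(1-4)])
qed

theorem mainTheorem2:
  fixes c :: pair_case
  shows
  "(\<forall>x u y v. line_params c x u \<and> line_params c y v \<and> line_set c x u \<noteq> line_set c y v \<longrightarrow>
      ((\<exists>\<phi>. sharp c \<phi> \<and> inc_line_plane c (line_set c x u) \<phi> \<and> inc_line_plane c (line_set c y v) \<phi>)
         \<longleftrightarrow> herm c x y = herm c u v) \<and>
      (herm c x y = herm c u v \<longrightarrow>
         (\<exists>\<phi>. sharp c \<phi> \<and> \<phi> x = u \<and> \<phi> y = v \<and>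
            (\<forall>\<psi>. sharp c \<psi> \<and> \<psi> x = u \<and> \<psi> y = v \<longrightarrow> (\<forall>z \<in> Aset c. \<psi> z = \<phi> z)) \<and>
            (\<forall>\<psi>. sharp c \<psi> \<and> inc_line_plane c (line_set c x u) \<psi> \<and> inc_line_plane c (line_set c y v) \<psi>
                 \<longrightarrow> (\<forall>z \<in> Aset c. \<psi> z = \<phi> z))))) \<and>
   (\<forall>L M P Q. is_line c L \<and> is_line c M \<and> is_point c P \<and> is_point c Q \<and> P \<noteq> Q \<and>
      inc_point_line c P L \<and> inc_point_line c Q L \<and> inc_point_line c P M \<and> inc_point_line c Q M \<longrightarrow>
      (\<forall>R. is_point c R \<longrightarrow> (inc_point_line c R L \<longleftrightarrow> inc_point_line c R M)))"
  apply (intro conjI allI impI)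
  subgoal by (simp add: coplanar_iff_herm_eq)
  subgoal by (simp add: unique_common_plane)
  subgoal using inc_point_line_transfer by blast
  done

end
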